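(* Let $m\geq 3$ be an odd integer. Let $g:\mathrm{GF}(2^m)\to\mathrm{GF}(2^m)$ be an almost bent function with $g(0)=0$. Let $A$ be an additive subgroup of $(\mathrm{GF}(2^m),+)$ of order $2^r$, where $0\leq r\leq m$. Define the binary code $$\mathcal{C}_{(g,A)}=\{(\mathrm{Tr}_1^m(ag(x)+bx))_{x\in \mathrm{GF}(2^m)^*}: a\in A,\ b\in \mathrm{GF}(2^m)\}.$$ Then $\mathcal{C}_{(g,A)}$ is a binary linear code with parameters $[2^m-1,\ m+r,\ 2^{m-1}-2^{(m-1)/2}]$ and weight distribution: weight $0$ with multiplicity $1$; weight $2^{m-1}-2^{(m-1)/2}$ with multiplicity $(2^r-1)(2^{m-2}+2^{(m-3)/2})$; weight $2^{m-1}$ with multiplicity $2^{m-1}(2^r+1)-1$; weight $2^{m-1}+2^{(m-1)/2}$ with multiplicity $(2^r-1)(2^{m-2}-2^{(m-3)/2})$; and no other weights occur.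
   Context: $\mathrm{Tr}_1^m$ denotes the absolute trace from $\mathrm{GF}(2^m)$ to $\mathrm{GF}(2)$. For $g:\mathrm{GF}(2^m)\to\mathrm{GF}(2^m)$ and $a,b\in\mathrm{GF}(2^m)$ set $\lambda_g(a,b)=\sum_{x\in\mathrm{GF}(2^m)}(-1)^{\mathrm{Tr}_1^m(ag(x)+bx)}$; $g$ is called almost bent if $\lambda_g(a,b)\in\{0,\pm 2^{(m+1)/2}\}$ for every pair $(a,b)$ with $a\neq 0$. The codewords are indexed by the elements of $\mathrm{GF}(2^m)^*$ in some fixed order. An $[n,k,d]$ code has length $n$, dimension $k$ and minimum Hamming distance $d$; the weight distribution lists, for each $w$, the number $A_w$ of codewords of Hamming weight $w$. *)

theory Defs
  imports Main
begin

text \<open>GF(2^m) is modelled by an arbitrary finite field type 'a with CARD('a) = 2^m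
  and characteristic 2 (every such field is GF(2^m) up to isomorphism).\<close>

definition tr :: "nat \<Rightarrow> 'a::field \<Rightarrow> 'a" where
  "tr m x = (\<Sum>i<m. x ^ (2 ^ i))"

definition walsh :: "nat \<Rightarrow> ('a::{field,finite} \<Rightarrow> 'a) \<Rightarrow> 'a \<Rightarrow> 'a \<Rightarrow> int" where
  "walsh m g a b = (\<Sum>x\<in>UNIV. (if tr m (a * g x + b * x) = 0 then 1 else -1))"

definition almost_bent :: "nat \<Rightarrow> ('a::{field,finite} \<Rightarrow> 'a) \<Rightarrow> bool" where
  "almost_bent m g \<longleftrightarrow>
     (\<forall>a b. a \<noteq> 0 \<longrightarrow> walsh m g a b \<in> {0, 2 ^ ((m + 1) div 2), - (2 ^ ((m + 1) div 2))})"

text \<open>Codewords are functions indexed by the nonzero field elements; the value at 0 is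
  a dummy set to 0. Entries lie in GF(2) = {0,1} inside the field.\<close>

definition codeword :: "nat \<Rightarrow> ('a::field \<Rightarrow> 'a) \<Rightarrow> 'a \<Rightarrow> 'a \<Rightarrow> 'a \<Rightarrow> 'a" where
  "codeword m g a b = (\<lambda>x. if x = 0 then 0 else tr m (a * g x + b * x))"

definition code_gA :: "nat \<Rightarrow> ('a::field \<Rightarrow> 'a) \<Rightarrow> 'a set \<Rightarrow> ('a \<Rightarrow> 'a) set" where
  "code_gA m g A = {codeword m g a b | a b. a \<in> A}"

definition hweight :: "('a::field \<Rightarrow> 'a) \<Rightarrow> nat" where
  "hweight c = card {x. x \<noteq> 0 \<and> c x \<noteq> 0}"

definition additive_subgroup :: "'a::field set \<Rightarrow> bool" where
  "additive_subgroup A \<longleftrightarrow> 0 \<in> A \<and> (\<forall>x\<in>A. \<forall>y\<in>A. x + y \<in> A) \<and> (\<forall>x\<in>A. - x \<in> A)"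

end

theory Submission
  imports Defs "HOL-Computational_Algebra.Polynomial"
begin

text \<open>
  Write \<open>\<psi>(t) = (-1)^Tr(t)\<close> (\<open>tr_sign\<close> below). Since \<open>Tr\<close> is additive, takes values in \<open>{0, 1}\<close> and is not identically
  zero, \<open>\<psi>\<close> is a nontrivial additive character, whence the orthogonality relation
  \<open>\<Sum>\<^sub>b \<psi>(b y) = 2^m [y = 0]\<close>. It gives the two moments \<open>\<Sum>\<^sub>b \<lambda>(a, b) = 2^m \<psi>(a g(0)) = 2^m\<close> and
  \<open>\<Sum>\<^sub>b \<lambda>(a, b)\<^sup>2 = 2^(2m)\<close> of every row of the Walsh spectrum, and \<open>\<lambda>(0, b) = 2^m [b = 0]\<close>.
  For \<open>a \<noteq> 0\<close> the values \<open>\<lambda>(a, b)\<close> lie in \<open>{0, \<plusminus>2^((m+1)/2)}\<close>, so the two moments fix how often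
  each value occurs. The codeword of \<open>(a, b)\<close> has weight \<open>(2^m - \<lambda>(a, b)) / 2\<close>, so no nonzero pair
  gives the zero word; hence \<open>(a, b) \<mapsto> codeword\<close> is injective on \<open>A \<times> GF(2^m)\<close> and the weight
  distribution of the code is the sum of the weight distributions of its rows.
\<close>

lemma CHAR_eq_2I:
  assumes "(1::'a::ring_1) + 1 = 0"
  shows "CHAR('a) = 2"
proof (rule CHAR_eq_posI)
  show "of_nat 2 = (0::'a)"
    using assms by simp
  show "of_nat n \<noteq> (0::'a)" if "n > 0" and "n < 2" for n
    using that by (simp add: less_2_cases_iff)
qed simp

lemma power_card_UNIV_eq_same:
  fixes x :: "'a::{field,finite}"
  shows "x ^ card (UNIV :: 'a set) = x"
proof (cases "x = 0")
  case False
  have "(\<Prod>y\<in>UNIV - {0}. y) = (\<Prod>y\<in>UNIV - {0}. x * y)"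
    by (rule prod.reindex_bij_witness[of _ "\<lambda>y. x * y" "\<lambda>y. y / x"]) (use False in auto)
  also have "\<dots> = x ^ (card (UNIV :: 'a set) - 1) * (\<Prod>y\<in>UNIV - {0}. y)"
    by (simp add: prod.distrib)
  finally have "x * x ^ (card (UNIV :: 'a set) - 1) = x"
    by simp
  moreover have "Suc (card (UNIV :: 'a set) - 1) = card (UNIV :: 'a set)"
    by (simp add: card_gt_0_iff)
  ultimately show ?thesis
    by (metis power_Suc)
qed (simp add: finite_UNIV_card_ge_0)

lemma tr_zero: "tr m 0 = 0"
  unfolding tr_def by (simp add: power_0_left)

lemma codeword_zero: "codeword m g 0 0 = (\<lambda>x. 0)"
  unfolding codeword_def by (simp add: fun_eq_iff tr_zero)

lemma code_gA_eq_image: "code_gA m g A = (\<lambda>(a, b). codeword m g a b) ` (A \<times> UNIV)"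
  unfolding code_gA_def by auto

lemma zero_in_code_gA:
  assumes "0 \<in> A"
  shows "(\<lambda>x. 0) \<in> code_gA m g A"
proof -
  have "codeword m g 0 0 \<in> code_gA m g A"
    using assms unfolding code_gA_def by blast
  then show ?thesis
    by (simp add: codeword_zero)
qed

definition tr_sign :: "nat \<Rightarrow> 'a::field \<Rightarrow> int" where
  "tr_sign m x = (if tr m x = 0 then 1 else -1)"

lemma tr_sign_mult_self: "tr_sign m x * tr_sign m x = 1"
  by (simp add: tr_sign_def)

lemma walsh_eq_sum_tr_sign: "walsh m g a b = (\<Sum>x\<in>UNIV. tr_sign m (a * g x + b * x))"
  unfolding walsh_def tr_sign_def ..

lemma sums_three_valued:
  fixes W :: "'b::finite \<Rightarrow> int"
  assumes "v \<noteq> 0" and W_values: "\<And>b. W b \<in> {0, v, -v}"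
  shows "(\<Sum>b\<in>UNIV. W b) = v * (int (card {b. W b = v}) - int (card {b. W b = -v}))"
    and "(\<Sum>b\<in>UNIV. W b ^ 2) = v ^ 2 * (int (card {b. W b = v}) + int (card {b. W b = -v}))"
    and "int (card (UNIV :: 'b set))
      = int (card {b. W b = v}) + int (card {b. W b = -v}) + int (card {b. W b = 0})"
proof -
  have "(\<Sum>b\<in>UNIV. W b) = (\<Sum>b\<in>UNIV. v * (of_bool (W b = v) - of_bool (W b = -v)))"
    using W_values assms(1) by (intro sum.cong) auto
  then show "(\<Sum>b\<in>UNIV. W b) = v * (int (card {b. W b = v}) - int (card {b. W b = -v}))"
    by (simp add: sum_distrib_left[symmetric] sum_subtractf)
  have "(\<Sum>b\<in>UNIV. W b ^ 2) = (\<Sum>b\<in>UNIV. v ^ 2 * (of_bool (W b = v) + of_bool (W b = -v)))"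
    using W_values assms(1) by (intro sum.cong) auto
  then show "(\<Sum>b\<in>UNIV. W b ^ 2) = v ^ 2 * (int (card {b. W b = v}) + int (card {b. W b = -v}))"
    by (simp add: sum_distrib_left[symmetric] sum.distrib)
  have "(\<Sum>b::'b\<in>UNIV. 1::int)
      = (\<Sum>b\<in>UNIV. of_bool (W b = v) + of_bool (W b = -v) + of_bool (W b = 0))"
    using W_values assms(1) by (intro sum.cong) auto
  then show "int (card (UNIV :: 'b set))
      = int (card {b. W b = v}) + int (card {b. W b = -v}) + int (card {b. W b = 0})"
    by (simp add: sum.distrib)
qed

lemma sum_eq_remove_const:
  assumes "finite A" and "z \<in> A" and "\<And>a. a \<in> A \<Longrightarrow> a \<noteq> z \<Longrightarrow> f a = n"
  shows "(\<Sum>a\<in>A. f a) = f z + (card A - 1) * (n::nat)"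
proof -
  have "(\<Sum>a\<in>A. f a) = f z + (\<Sum>a\<in>A - {z}. f a)"
    using assms(1,2) by (rule sum.remove)
  also have "(\<Sum>a\<in>A - {z}. f a) = (\<Sum>a\<in>A - {z}. n)"
    using assms(3) by (intro sum.cong) auto
  finally show ?thesis
    using assms(1,2) by simp
qed

lemma ex_neq_if_card_gt_1:
  assumes "finite A" and "1 < card A"
  shows "\<exists>a\<in>A. a \<noteq> z"
proof (rule ccontr)
  assume "\<not> (\<exists>a\<in>A. a \<noteq> z)"
  then have "card A \<le> card {z}"
    by (intro card_mono) auto
  then show False
    using assms(2) by simp
qed

lemma min_weight_bounds:
  shows "0 < 4 * 2 ^ k * 2 ^ k - 2 * (2::nat) ^ k"
    and "4 * 2 ^ k * 2 ^ k - 2 * 2 ^ k < 4 * 2 ^ k * (2::nat) ^ k"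
    and "int (4 * 2 ^ k * 2 ^ k - 2 * 2 ^ k) = 4 * 2 ^ k * 2 ^ k - 2 * 2 ^ k"
proof -
  have "2 * (2::nat) ^ k < 4 * 2 ^ k * 1"
    by simp
  also have "\<dots> \<le> 4 * 2 ^ k * 2 ^ k"
    by (intro mult_le_mono2) simp
  finally show "0 < 4 * 2 ^ k * 2 ^ k - 2 * (2::nat) ^ k"
    by simp
  then show "4 * 2 ^ k * 2 ^ k - 2 * 2 ^ k < 4 * 2 ^ k * (2::nat) ^ k"
    and "int (4 * 2 ^ k * 2 ^ k - 2 * 2 ^ k) = 4 * 2 ^ k * 2 ^ k - 2 * 2 ^ k"
    by simp_all
qed

lemma two_powers_odd_exponent:
  assumes "m = 2 * k + 3"
  shows "2 ^ (m - 1) = 4 * 2 ^ k * (2 ^ k :: nat)" and "2 ^ ((m - 1) div 2) = 2 * (2 ^ k :: nat)"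
    and "2 ^ (m - 2) = 2 * 2 ^ k * (2 ^ k :: nat)" and "2 ^ ((m - 3) div 2) = (2 ^ k :: nat)"
proof -
  have "m - 1 = 2 + k + k" "(m - 1) div 2 = Suc k" "m - 2 = 1 + k + k" "(m - 3) div 2 = k"
    using assms by simp_all
  then show "2 ^ (m - 1) = 4 * 2 ^ k * (2 ^ k :: nat)" "2 ^ ((m - 1) div 2) = 2 * (2 ^ k :: nat)"
    "2 ^ (m - 2) = 2 * 2 ^ k * (2 ^ k :: nat)" "2 ^ ((m - 3) div 2) = (2 ^ k :: nat)"
    by (simp_all add: power_add)
qed

section \<open>The trace of a field of order 2^m\<close>

context
  fixes m :: nat
  assumes card_UNIV: "card (UNIV :: 'a::{field,finite} set) = 2 ^ m"
    and char2: "(1::'a) + 1 = 0"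
begin

lemma CHAR_2: "CHAR('a) = 2"
  using char2 by (rule CHAR_eq_2I)

lemma add_eq_0_iff_eq: "(x::'a) + y = 0 \<longleftrightarrow> y = x"
  using uminus_CHAR_2[OF CHAR_2, of x] add_eq_0_iff[of x y] by metis

lemma freshmans_dream_2: "((x::'a) + y) ^ 2 ^ i = x ^ 2 ^ i + y ^ 2 ^ i"
  by (rule freshmans_dream') (simp_all add: CHAR_2)

lemma tr_add: "tr m ((x::'a) + y) = tr m x + tr m y"
  unfolding tr_def by (simp add: freshmans_dream_2 sum.distrib)

lemma exponent_pos: "m > 0"
proof -
  have "card {0, 1::'a} \<le> 2 ^ m"
    using card_UNIV card_mono[of UNIV "{0, 1::'a}"] by simp
  then show ?thesis
    by (cases m) simp_all
qed

text \<open>Squaring shifts the summands of the trace cyclically, because \<open>x ^ 2 ^ m = x\<close>.\<close>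

lemma tr_square: "tr m (x::'a) ^ 2 = tr m x"
proof -
  obtain k where m: "m = Suc k"
    using exponent_pos gr0_implies_Suc by blast
  have "tr m x ^ 2 = (\<Sum>i<m. (x ^ 2 ^ i) ^ 2)"
    unfolding tr_def by (rule freshmans_dream_sum'[where n = 1]) (simp_all add: CHAR_2)
  also have "\<dots> = (\<Sum>i<m. x ^ 2 ^ Suc i)"
    by (intro sum.cong refl) (metis power_Suc2 power_mult)
  also have "\<dots> = (\<Sum>i<k. x ^ 2 ^ Suc i) + x ^ 2 ^ 0"
    using power_card_UNIV_eq_same[of x] by (simp add: m card_UNIV)
  also have "\<dots> = tr m x"
    unfolding tr_def m sum.lessThan_Suc_shift by simp
  finally show ?thesis .
qed

lemma tr_eq_0_or_1: "tr m (x::'a) = 0 \<or> tr m x = 1"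
proof -
  have "tr m x * (tr m x - 1) = 0"
    using tr_square[of x] by (simp add: power2_eq_square algebra_simps)
  then show ?thesis
    by simp
qed

text \<open>The trace is a polynomial function of degree \<open>2 ^ (m - 1) < 2 ^ m\<close>, so it has a non-root.\<close>

lemma ex_tr_eq_1: "\<exists>z::'a. tr m z = 1"
proof -
  define p :: "'a poly" where "p = (\<Sum>i<m. monom 1 (2 ^ i))"
  have poly_p: "poly p x = tr m x" for x
    unfolding p_def tr_def by (simp add: poly_sum poly_monom)
  have "coeff p 1 = (\<Sum>i<m. if i = 0 then 1 else 0)"
    unfolding p_def coeff_sum coeff_monom by (intro sum.cong) auto
  then have "p \<noteq> 0"
    using exponent_pos by auto
  then have "card {x. poly p x = 0} \<le> degree p"
    by (rule card_poly_roots_bound)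
  also have "degree p < 2 ^ m"
    unfolding p_def by (rule degree_sum_less) (auto intro: le_less_trans[OF degree_monom_le])
  finally have "{x. poly p x = 0} \<noteq> UNIV"
    using card_UNIV by auto
  then have "\<exists>z::'a. tr m z \<noteq> 0"
    using poly_p by auto
  then show ?thesis
    using tr_eq_0_or_1 by blast
qed

lemma codeword_binary: "codeword m g a b x \<in> {0, 1::'a}"
  unfolding codeword_def using tr_eq_0_or_1 by auto

lemma codeword_add:
  "codeword m g a b x + codeword m g a' b' x = codeword m g (a + a') (b + b') (x::'a)"
  unfolding codeword_def by (simp add: tr_add algebra_simps)

lemma code_gA_binary:
  assumes "c \<in> code_gA m g A"
  shows "c x \<in> {0, 1::'a}"
proof -
  obtain a b where "c = codeword m g a b"
    using assms unfolding code_gA_def by blast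
  then show ?thesis
    using codeword_binary by simp
qed

lemma code_gA_add_closed:
  assumes "additive_subgroup A" and "c \<in> code_gA m g A" and "c' \<in> code_gA m g A"
  shows "(\<lambda>x::'a. c x + c' x) \<in> code_gA m g A"
proof -
  obtain a b a' b' where "c = codeword m g a b" "c' = codeword m g a' b'" "a \<in> A" "a' \<in> A"
    using assms(2,3) unfolding code_gA_def by blast
  moreover have "a + a' \<in> A"
    using assms(1) \<open>a \<in> A\<close> \<open>a' \<in> A\<close> unfolding additive_subgroup_def by blast
  ultimately show ?thesis
    unfolding code_gA_def by (auto simp: codeword_add)
qed

section \<open>The Walsh spectrum\<close>

lemma tr_sign_add: "tr_sign m ((x::'a) + y) = tr_sign m x * tr_sign m y"
  using tr_eq_0_or_1[of x] tr_eq_0_or_1[of y] char2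
  by (auto simp: tr_sign_def tr_add)

text \<open>For \<open>y \<noteq> 0\<close>, replacing \<open>b\<close> by \<open>b + z / y\<close> with \<open>tr m z = 1\<close> flips the sign of every summand.\<close>

lemma sum_tr_sign_mult: "(\<Sum>b\<in>UNIV. tr_sign m (b * (y::'a))) = (if y = 0 then 2 ^ m else 0)"
proof (cases "y = 0")
  case True
  then show ?thesis
    using card_UNIV by (simp add: tr_sign_def tr_zero)
next
  case False
  obtain z :: 'a where z: "tr m z = 1"
    using ex_tr_eq_1 by blast
  let ?S = "\<Sum>b\<in>UNIV. tr_sign m (b * y)"
  have "?S = (\<Sum>b\<in>UNIV. tr_sign m ((b + z / y) * y))"
    by (rule sum.reindex_bij_witness[of _ "\<lambda>b. b + z / y" "\<lambda>b. b - z / y"]) auto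
  also have "\<dots> = (\<Sum>b\<in>UNIV. tr_sign m (b * y) * tr_sign m z)"
    using False by (simp add: distrib_right tr_sign_add)
  also have "\<dots> = - ?S"
    using z by (simp add: tr_sign_def sum_negf)
  finally show ?thesis
    using False by simp
qed

lemma walsh_zero_left:
  fixes g :: "'a \<Rightarrow> 'a"
  shows "walsh m g 0 b = (if b = 0 then 2 ^ m else 0)"
  using sum_tr_sign_mult[of b] unfolding walsh_eq_sum_tr_sign by (simp add: mult.commute)

lemma sum_walsh:
  fixes g :: "'a \<Rightarrow> 'a"
  shows "(\<Sum>b\<in>UNIV. walsh m g a b) = 2 ^ m * tr_sign m (a * g 0)"
proof -
  have "(\<Sum>b\<in>UNIV. walsh m g a b)
      = (\<Sum>x\<in>UNIV. tr_sign m (a * g x) * (\<Sum>b\<in>UNIV. tr_sign m (b * x)))"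
    unfolding walsh_eq_sum_tr_sign tr_sign_add sum_distrib_left by (rule sum.swap)
  also have "\<dots> = (\<Sum>x\<in>UNIV. if x = 0 then tr_sign m (a * g x) * 2 ^ m else 0)"
    by (intro sum.cong refl) (simp add: sum_tr_sign_mult)
  finally show ?thesis
    by simp
qed

lemma sum_walsh_square:
  fixes g :: "'a \<Rightarrow> 'a"
  shows "(\<Sum>b\<in>UNIV. walsh m g a b ^ 2) = 2 ^ m * 2 ^ m"
proof -
  define f where "f x = tr_sign m (a * g x)" for x
  have "(\<Sum>b\<in>UNIV. walsh m g a b ^ 2)
      = (\<Sum>b\<in>UNIV. \<Sum>x\<in>UNIV. \<Sum>y\<in>UNIV. f x * f y * tr_sign m (b * (x + y)))"
    unfolding walsh_eq_sum_tr_sign power2_eq_square sum_product f_def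
    by (simp add: tr_sign_add distrib_left mult_ac)
  also have "\<dots> = (\<Sum>x\<in>UNIV. \<Sum>y\<in>UNIV. \<Sum>b\<in>UNIV. f x * f y * tr_sign m (b * (x + y)))"
    by (subst sum.swap) (intro sum.cong refl sum.swap)
  also have "\<dots> = (\<Sum>x\<in>UNIV. \<Sum>y\<in>UNIV. if y = x then f x * f x * 2 ^ m else 0)"
    unfolding sum_distrib_left[symmetric]
    by (intro sum.cong refl) (simp add: sum_tr_sign_mult add_eq_0_iff_eq)
  also have "\<dots> = (\<Sum>x::'a\<in>UNIV. 2 ^ m)"
    by (simp add: f_def tr_sign_mult_self)
  finally show ?thesis
    using card_UNIV by simp
qed

lemma walsh_eq_weight:
  fixes g :: "'a \<Rightarrow> 'a"
  assumes "g 0 = 0"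
  shows "walsh m g a b = 2 ^ m - 2 * int (hweight (codeword m g a b))"
proof -
  have "hweight (codeword m g a b) = card {x. tr m (a * g x + b * x) \<noteq> 0}"
    unfolding hweight_def codeword_def by (rule arg_cong[where f = card]) (auto simp: assms tr_zero)
  moreover have "walsh m g a b = (\<Sum>x\<in>UNIV. 1 - 2 * of_bool (tr m (a * g x + b * x) \<noteq> 0))"
    unfolding walsh_def by (intro sum.cong) auto
  ultimately show ?thesis
    by (simp add: sum_subtractf sum_distrib_left[symmetric] card_UNIV)
qed

section \<open>Almost bent functions and the weights of the code\<close>

text \<open>
  Writing the odd exponent as \<open>m = 2 k + 3\<close> keeps all quantities free of halved exponents:
  \<open>2 ^ m = 8 K\<^sup>2\<close> and \<open>2 ^ ((m + 1) div 2) = 4 K\<close> for \<open>K = 2 ^ k\<close>, and the three nonzero weights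
  \<open>2 ^ (m - 1) \<plusminus> 2 ^ ((m - 1) div 2)\<close> and \<open>2 ^ (m - 1)\<close> become \<open>4 K\<^sup>2 \<plusminus> 2 K\<close> and \<open>4 K\<^sup>2\<close>.
\<close>

context
  fixes k :: nat and g :: "'a \<Rightarrow> 'a"
  assumes m_eq: "m = 2 * k + 3" and almost_bent: "almost_bent m g" and g_0: "g 0 = 0"
begin

lemma two_power_m: "2 ^ m = 8 * 2 ^ k * (2 ^ k :: 'b::comm_semiring_1)"
  unfolding m_eq mult_2 power_add by (simp add: mult_ac)

lemma walsh_almost_bent: "a \<noteq> 0 \<Longrightarrow> walsh m g a b \<in> {0, 4 * 2 ^ k, - (4 * 2 ^ k)}"
  using almost_bent unfolding almost_bent_def m_eq by (simp add: power_add)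

lemma card_walsh_almost_bent:
  assumes "a \<noteq> 0"
  shows "card {b. walsh m g a b = 4 * 2 ^ k} = 2 * 2 ^ k * 2 ^ k + 2 ^ k"
    and "card {b. walsh m g a b = - (4 * 2 ^ k)} = 2 * 2 ^ k * 2 ^ k - 2 ^ k"
    and "card {b. walsh m g a b = 0} = 4 * 2 ^ k * 2 ^ k"
proof -
  define K :: int where "K = 2 ^ k"
  define P N Z where "P = int (card {b. walsh m g a b = 4 * K})"
    and "N = int (card {b. walsh m g a b = - (4 * K)})" and "Z = int (card {b. walsh m g a b = 0})"
  note sums = sums_three_valued[of "4 * K" "walsh m g a", folded P_def N_def Z_def]
  have "4 * K * (P - N) = 4 * K * (2 * K)"
    using sums(1) sum_walsh[of g a] two_power_m[where 'b = int] walsh_almost_bent[OF assms]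
    by (simp add: K_def g_0 tr_sign_def tr_zero)
  then have "P - N = 2 * K"
    by (simp add: K_def)
  have "16 * K * K * (P + N) = 16 * K * K * (4 * K * K)"
    using sums(2) sum_walsh_square[of g a] two_power_m[where 'b = int] walsh_almost_bent[OF assms]
    by (simp add: K_def power2_eq_square algebra_simps)
  then have "P + N = 4 * K * K"
    by (simp add: K_def)
  have "P + N + Z = 8 * K * K"
    using sums(3) card_UNIV two_power_m[where 'b = int] walsh_almost_bent[OF assms]
    by (simp add: K_def)
  then have "P = 2 * K * K + K" and "N = 2 * K * K - K" and "Z = 4 * K * K"
    using \<open>P - N = 2 * K\<close> \<open>P + N = 4 * K * K\<close> by linarith+
  moreover have "(2::nat) ^ k \<le> 2 * 2 ^ k * 2 ^ k"
    by simp
  then have "int (2 * 2 ^ k * 2 ^ k - 2 ^ k) = 2 * K * K - K"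
    unfolding K_def by (simp only: of_nat_diff) simp
  ultimately have "int (card {b. walsh m g a b = 4 * 2 ^ k}) = int (2 * 2 ^ k * 2 ^ k + 2 ^ k)"
    and "int (card {b. walsh m g a b = - (4 * 2 ^ k)}) = int (2 * 2 ^ k * 2 ^ k - 2 ^ k)"
    and "int (card {b. walsh m g a b = 0}) = int (4 * 2 ^ k * 2 ^ k)"
    unfolding P_def N_def Z_def K_def by simp_all
  then show "card {b. walsh m g a b = 4 * 2 ^ k} = 2 * 2 ^ k * 2 ^ k + 2 ^ k"
    and "card {b. walsh m g a b = - (4 * 2 ^ k)} = 2 * 2 ^ k * 2 ^ k - 2 ^ k"
    and "card {b. walsh m g a b = 0} = 4 * 2 ^ k * 2 ^ k"
    by (simp_all only: of_nat_eq_iff)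
qed

lemma hweight_codeword_eq_iff:
  "hweight (codeword m g a b) = w \<longleftrightarrow> walsh m g a b = 8 * 2 ^ k * 2 ^ k - 2 * int w"
  using walsh_eq_weight[of g a b, OF g_0] two_power_m[where 'b = int] by auto

lemma hweight_codeword_zero_left:
  "hweight (codeword m g 0 b) = (if b = 0 then 0 else 4 * 2 ^ k * 2 ^ k)"
  by (simp add: hweight_codeword_eq_iff walsh_zero_left two_power_m[where 'b = int])

lemma hweight_codeword_cases:
  assumes "a \<noteq> 0"
  shows "hweight (codeword m g a b)
    \<in> {4 * 2 ^ k * 2 ^ k - 2 * 2 ^ k, 4 * 2 ^ k * 2 ^ k, 4 * 2 ^ k * 2 ^ k + 2 * 2 ^ k}"
  using walsh_almost_bent[OF assms, of b] by (auto simp: hweight_codeword_eq_iff min_weight_bounds(3))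

lemma card_hweight_codeword:
  assumes "a \<noteq> 0"
  shows "card {b. hweight (codeword m g a b) = 4 * 2 ^ k * 2 ^ k - 2 * 2 ^ k} = 2 * 2 ^ k * 2 ^ k + 2 ^ k"
    and "card {b. hweight (codeword m g a b) = 4 * 2 ^ k * 2 ^ k} = 4 * 2 ^ k * 2 ^ k"
    and "card {b. hweight (codeword m g a b) = 4 * 2 ^ k * 2 ^ k + 2 * 2 ^ k} = 2 * 2 ^ k * 2 ^ k - 2 ^ k"
  using card_walsh_almost_bent[OF assms] by (simp_all add: hweight_codeword_eq_iff min_weight_bounds(3))

lemma hweight_codeword_eq_0_iff: "hweight (codeword m g a b) = 0 \<longleftrightarrow> a = 0 \<and> b = 0"
  using hweight_codeword_cases[of a b] min_weight_bounds(1)[of k]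
  by (cases "a = 0") (auto simp: hweight_codeword_zero_left)

lemma inj_codeword: "inj (\<lambda>(a, b). codeword m g a b)"
proof (rule injI, clarsimp)
  fix a b a' b'
  assume eq: "codeword m g a b = codeword m g a' b'"
  have "codeword m g (a + a') (b + b') x = 0" for x
    using add_eq_0_iff_eq[of "codeword m g a b x"] by (simp only: eq flip: codeword_add)
  then have "hweight (codeword m g (a + a') (b + b')) = 0"
    by (simp add: hweight_def)
  then show "a = a' \<and> b = b'"
    by (auto simp: hweight_codeword_eq_0_iff add_eq_0_iff_eq)
qed

lemma card_code_gA: "card (code_gA m g A) = card A * 2 ^ m"
  unfolding code_gA_eq_image
  by (simp add: card_image inj_on_subset[OF inj_codeword] card_cartesian_product card_UNIV)

lemma hweight_code_gA_cases:
  assumes "c \<in> code_gA m g A"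
  shows "c = (\<lambda>x. 0)
    \<or> hweight c \<in> {4 * 2 ^ k * 2 ^ k - 2 * 2 ^ k, 4 * 2 ^ k * 2 ^ k, 4 * 2 ^ k * 2 ^ k + 2 * 2 ^ k}"
proof -
  obtain a b where c: "c = codeword m g a b"
    using assms unfolding code_gA_def by blast
  show ?thesis
  proof (cases "a = 0")
    case True
    then show ?thesis
      using c by (auto simp: hweight_codeword_zero_left codeword_zero)
  next
    case False
    then show ?thesis
      using c hweight_codeword_cases by blast
  qed
qed

lemma hweight_code_gA:
  "c \<in> code_gA m g A
    \<Longrightarrow> hweight c \<in> {0, 4 * 2 ^ k * 2 ^ k - 2 * 2 ^ k, 4 * 2 ^ k * 2 ^ k, 4 * 2 ^ k * 2 ^ k + 2 * 2 ^ k}"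
  using hweight_code_gA_cases[of c] by (auto simp: hweight_def)

lemma card_code_gA_weight:
  assumes "0 \<in> A" and "\<And>a. a \<noteq> 0 \<Longrightarrow> card {b. hweight (codeword m g a b) = w} = n"
  shows "card {c \<in> code_gA m g A. hweight c = w}
    = card {b. hweight (codeword m g 0 b) = w} + (card A - 1) * n"
proof -
  have "{c \<in> code_gA m g A. hweight c = w}
      = (\<lambda>(a, b). codeword m g a b) ` (SIGMA a:A. {b. hweight (codeword m g a b) = w})"
    unfolding code_gA_eq_image by auto
  then have "card {c \<in> code_gA m g A. hweight c = w}
      = (\<Sum>a\<in>A. card {b. hweight (codeword m g a b) = w})"
    by (simp add: card_image inj_on_subset[OF inj_codeword])
  also have "\<dots> = card {b. hweight (codeword m g 0 b) = w} + (card A - 1) * n"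
    using assms by (intro sum_eq_remove_const) auto
  finally show ?thesis .
qed

lemma card_code_gA_weights:
  assumes "0 \<in> A" and "card A = 2 ^ r"
  shows "card {c \<in> code_gA m g A. hweight c = 0} = 1"
    and "card {c \<in> code_gA m g A. hweight c = 4 * 2 ^ k * 2 ^ k - 2 * 2 ^ k}
      = (2 ^ r - 1) * (2 * 2 ^ k * 2 ^ k + 2 ^ k)"
    and "card {c \<in> code_gA m g A. hweight c = 4 * 2 ^ k * 2 ^ k} = 4 * 2 ^ k * 2 ^ k * (2 ^ r + 1) - 1"
    and "card {c \<in> code_gA m g A. hweight c = 4 * 2 ^ k * 2 ^ k + 2 * 2 ^ k}
      = (2 ^ r - 1) * (2 * 2 ^ k * 2 ^ k - 2 ^ k)"
proof -
  have row_0: "{b. hweight (codeword m g 0 b) = w}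
      = (if w = 0 then {0} else if w = 4 * 2 ^ k * 2 ^ k then UNIV - {0} else {})" for w
    by (auto simp: hweight_codeword_zero_left)
  have "card {b. hweight (codeword m g a b) = 0} = 0" if "a \<noteq> 0" for a
    using that by (simp add: hweight_codeword_eq_0_iff)
  then show "card {c \<in> code_gA m g A. hweight c = 0} = 1"
    using card_code_gA_weight[OF assms(1), of 0 0] row_0 by simp
  show "card {c \<in> code_gA m g A. hweight c = 4 * 2 ^ k * 2 ^ k - 2 * 2 ^ k}
      = (2 ^ r - 1) * (2 * 2 ^ k * 2 ^ k + 2 ^ k)"
    using card_code_gA_weight[OF assms(1) card_hweight_codeword(1)] row_0 min_weight_bounds(1)[of k] assms(2)
    by (simp add: less_imp_neq[OF min_weight_bounds(2)[of k]])
  show "card {c \<in> code_gA m g A. hweight c = 4 * 2 ^ k * 2 ^ k + 2 * 2 ^ k}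
      = (2 ^ r - 1) * (2 * 2 ^ k * 2 ^ k - 2 ^ k)"
    using card_code_gA_weight[OF assms(1) card_hweight_codeword(3)] row_0 assms(2) by simp
  have "card {c \<in> code_gA m g A. hweight c = 4 * 2 ^ k * 2 ^ k}
      = (8 * 2 ^ k * 2 ^ k - 1) + (2 ^ r - 1) * (4 * 2 ^ k * 2 ^ k)"
    using card_code_gA_weight[OF assms(1) card_hweight_codeword(2)] row_0 assms(2)
    by (simp add: card_UNIV two_power_m)
  also have "\<dots> = 4 * 2 ^ k * 2 ^ k * (2 ^ r + 1) - 1"
    by (simp add: algebra_simps)
  finally show "card {c \<in> code_gA m g A. hweight c = 4 * 2 ^ k * 2 ^ k}
      = 4 * 2 ^ k * 2 ^ k * (2 ^ r + 1) - 1" .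
qed

lemma Min_hweight_code_gA:
  assumes "a \<in> A" and "a \<noteq> 0"
  shows "Min {hweight c | c. c \<in> code_gA m g A \<and> c \<noteq> (\<lambda>x. 0)} = 4 * 2 ^ k * 2 ^ k - 2 * 2 ^ k"
proof (rule Min_eqI)
  show "finite {hweight c | c. c \<in> code_gA m g A \<and> c \<noteq> (\<lambda>x. 0)}"
    by simp
  show "4 * 2 ^ k * 2 ^ k - 2 * 2 ^ k \<le> w"
    if "w \<in> {hweight c | c. c \<in> code_gA m g A \<and> c \<noteq> (\<lambda>x. 0)}" for w
    using that hweight_code_gA_cases by fastforce
  have "card {b. hweight (codeword m g a b) = 4 * 2 ^ k * 2 ^ k - 2 * 2 ^ k} \<noteq> 0"
    using card_hweight_codeword(1)[OF assms(2)] by simp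
  then obtain b where b: "hweight (codeword m g a b) = 4 * 2 ^ k * 2 ^ k - 2 * 2 ^ k"
    by (metis (mono_tags, lifting) card.empty empty_Collect_eq)
  then have "codeword m g a b \<noteq> (\<lambda>x. 0)"
    using min_weight_bounds(1)[of k] by (auto simp: hweight_def)
  moreover have "codeword m g a b \<in> code_gA m g A"
    using assms(1) unfolding code_gA_def by blast
  ultimately show "4 * 2 ^ k * 2 ^ k - 2 * 2 ^ k
      \<in> {hweight c | c. c \<in> code_gA m g A \<and> c \<noteq> (\<lambda>x. 0)}"
    using b by (auto intro!: exI[of _ "codeword m g a b"])
qed

end

end

theorem theorem2:
  fixes g :: "'a::{field,finite} \<Rightarrow> 'a" and A :: "'a set" and m r :: nat
  assumes "odd m" and "m \<ge> 3"
    and "card (UNIV :: 'a set) = 2 ^ m" and "(1::'a) + 1 = 0"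
    and "almost_bent m g" and "g 0 = 0"
    and "additive_subgroup A" and "card A = 2 ^ r" and "r \<le> m"
  shows "(\<forall>c\<in>code_gA m g A. \<forall>x. c x \<in> {0, 1})
    \<and> (\<lambda>x. 0) \<in> code_gA m g A
    \<and> (\<forall>c1\<in>code_gA m g A. \<forall>c2\<in>code_gA m g A. (\<lambda>x. c1 x + c2 x) \<in> code_gA m g A)
    \<and> card {x::'a. x \<noteq> 0} = 2 ^ m - 1
    \<and> card (code_gA m g A) = 2 ^ (m + r)
    \<and> (r \<ge> 1 \<longrightarrow> Min {hweight c | c. c \<in> code_gA m g A \<and> c \<noteq> (\<lambda>x. 0)}
                    = 2 ^ (m - 1) - 2 ^ ((m - 1) div 2))
    \<and> card {c \<in> code_gA m g A. hweight c = 0} = 1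
    \<and> card {c \<in> code_gA m g A. hweight c = 2 ^ (m - 1) - 2 ^ ((m - 1) div 2)}
        = (2 ^ r - 1) * (2 ^ (m - 2) + 2 ^ ((m - 3) div 2))
    \<and> card {c \<in> code_gA m g A. hweight c = 2 ^ (m - 1)} = 2 ^ (m - 1) * (2 ^ r + 1) - 1
    \<and> card {c \<in> code_gA m g A. hweight c = 2 ^ (m - 1) + 2 ^ ((m - 1) div 2)}
        = (2 ^ r - 1) * (2 ^ (m - 2) - 2 ^ ((m - 3) div 2))
    \<and> (\<forall>c\<in>code_gA m g A. hweight c \<in> {0, 2 ^ (m - 1) - 2 ^ ((m - 1) div 2), 2 ^ (m - 1),
                                        2 ^ (m - 1) + 2 ^ ((m - 1) div 2)})"
proof -
  have "\<exists>k. m = 2 * k + 3"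
    using assms(1,2) by presburger
  then obtain k where m_eq: "m = 2 * k + 3"
    by blast
  note gf = assms(3,4) and ab = assms(3,4) m_eq assms(5,6)
  have zero_A: "0 \<in> A"
    using assms(7) unfolding additive_subgroup_def by blast
  have nonzero_A: "\<exists>a\<in>A. a \<noteq> 0" if "r \<ge> 1"
    using ex_neq_if_card_gt_1[of A] assms(8) that one_less_power[of "2::nat" r] by simp
  have "{x::'a. x \<noteq> 0} = UNIV - {0}"
    by blast
  then have "card {x::'a. x \<noteq> 0} = 2 ^ m - 1"
    using assms(3) by (simp add: card_Diff_singleton)
  moreover have "card (code_gA m g A) = 2 ^ (m + r)"
    using card_code_gA[OF ab] assms(8) by (simp add: power_add)
  ultimately show ?thesis
    unfolding two_powers_odd_exponent[OF m_eq]
    using code_gA_binary[OF gf] zero_in_code_gA[OF zero_A] code_gA_add_closed[OF gf assms(7)]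
      Min_hweight_code_gA[OF ab] nonzero_A card_code_gA_weights[OF ab zero_A assms(8)]
      hweight_code_gA[OF ab]
    by (intro conjI) blast+
qed

end
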